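(* In the setting described in the context, let $S_1(B)$ be the set of points $(x_1,x_2,x_3,y_1,y_2,y_3)\in S_0(B)$ for which there exist non-zero rationals $g$ and $\nu$ such that \[a_2x_1=\nu\{4a_1y_1-5g^2a_2y_2\}\quad\text{and}\quad a_1x_2=\nu g^3\{5a_1y_1-4g^2a_2y_2\},\] and let $S_1^*(B)$ be the set of quadruples $(x_1,x_2,y_1,y_2)$ for which there is a pair $(x_3,y_3)$ with $(x_1,x_2,x_3,y_1,y_2,y_3)\in S_1(B)$. Then \[\#S_1(B)=\#S_1^*(B)\ll B^{1/2}.\]
   Context: Let $a_1,a_2,a_3$ be non-zero square-free pairwise coprime integers, let $B\ge 2$, and let $X_1,X_2,X_3,Y_1,Y_2,Y_3$ be powers of 2 not exceeding $2B$ with $X_i^2Y_i^3\le 32B/|a_i|$ for $i=1,2,3$, and assume moreover that $B^{1/5-1/60}\le X_k\le B^{1/5+1/60}$ and $B^{1/5-1/90}\le Y_k\le B^{1/5+1/90}$ for $k=1,2,3$. Let $S_0(B)$ be the set of 6-tuples of positive integers $(x_1,x_2,x_3,y_1,y_2,y_3)$ with $\tfrac12X_i<x_i\le X_i$ and $\tfrac12Y_i<y_i\le Y_i$ ($i=1,2,3$), satisfying $a_1x_1^2y_1^3+a_2x_2^2y_2^3+a_3x_3^2y_3^3=0$, $\gcd(x_1y_1,x_2y_2,x_3y_3)=\gcd(a_1a_2a_3,x_1x_2x_3y_1y_2y_3)=1$, and with $a_1y_1,a_2y_2,a_3y_3$ square-free. The implied constant is absolute. *)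

theory Defs
  imports Complex_Main "HOL-Computational_Algebra.Squarefree"
begin

definition pow2 :: "nat \<Rightarrow> bool" where
  "pow2 n \<longleftrightarrow> (\<exists>k::nat. n = 2 ^ k)"

text \<open>The set S_0(B); it depends on B only through the boxes X_i, Y_i.
  Tuples are (x1, x2, x3, y1, y2, y3).\<close>
definition S0 :: "int \<Rightarrow> int \<Rightarrow> int \<Rightarrow> nat \<Rightarrow> nat \<Rightarrow> nat \<Rightarrow> nat \<Rightarrow> nat \<Rightarrow> nat
    \<Rightarrow> (nat \<times> nat \<times> nat \<times> nat \<times> nat \<times> nat) set" where
  "S0 a1 a2 a3 X1 X2 X3 Y1 Y2 Y3 =
    {(x1, x2, x3, y1, y2, y3).
       0 < x1 \<and> 0 < x2 \<and> 0 < x3 \<and> 0 < y1 \<and> 0 < y2 \<and> 0 < y3 \<and>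
       real X1 / 2 < real x1 \<and> x1 \<le> X1 \<and>
       real X2 / 2 < real x2 \<and> x2 \<le> X2 \<and>
       real X3 / 2 < real x3 \<and> x3 \<le> X3 \<and>
       real Y1 / 2 < real y1 \<and> y1 \<le> Y1 \<and>
       real Y2 / 2 < real y2 \<and> y2 \<le> Y2 \<and>
       real Y3 / 2 < real y3 \<and> y3 \<le> Y3 \<and>
       a1 * int x1 ^ 2 * int y1 ^ 3 + a2 * int x2 ^ 2 * int y2 ^ 3
         + a3 * int x3 ^ 2 * int y3 ^ 3 = 0 \<and>
       gcd (gcd (x1 * y1) (x2 * y2)) (x3 * y3) = 1 \<and>
       gcd (a1 * a2 * a3) (int (x1 * x2 * x3 * y1 * y2 * y3)) = 1 \<and>
       squarefree (a1 * int y1) \<and> squarefree (a2 * int y2) \<and> squarefree (a3 * int y3)}"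

definition S1 :: "int \<Rightarrow> int \<Rightarrow> int \<Rightarrow> nat \<Rightarrow> nat \<Rightarrow> nat \<Rightarrow> nat \<Rightarrow> nat \<Rightarrow> nat
    \<Rightarrow> (nat \<times> nat \<times> nat \<times> nat \<times> nat \<times> nat) set" where
  "S1 a1 a2 a3 X1 X2 X3 Y1 Y2 Y3 =
    {(x1, x2, x3, y1, y2, y3) \<in> S0 a1 a2 a3 X1 X2 X3 Y1 Y2 Y3.
       \<exists>g \<nu> :: rat. g \<noteq> 0 \<and> \<nu> \<noteq> 0 \<and>
         of_int a2 * of_nat x1 = \<nu> * (4 * of_int a1 * of_nat y1 - 5 * g ^ 2 * of_int a2 * of_nat y2) \<and>
         of_int a1 * of_nat x2 = \<nu> * g ^ 3 * (5 * of_int a1 * of_nat y1 - 4 * g ^ 2 * of_int a2 * of_nat y2)}"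

definition S1star :: "int \<Rightarrow> int \<Rightarrow> int \<Rightarrow> nat \<Rightarrow> nat \<Rightarrow> nat \<Rightarrow> nat \<Rightarrow> nat \<Rightarrow> nat
    \<Rightarrow> (nat \<times> nat \<times> nat \<times> nat) set" where
  "S1star a1 a2 a3 X1 X2 X3 Y1 Y2 Y3 =
    {(x1, x2, y1, y2). \<exists>x3 y3. (x1, x2, x3, y1, y2, y3) \<in> S1 a1 a2 a3 X1 X2 X3 Y1 Y2 Y3}"

end

theory Submission
  imports Defs
begin

text \<open>
  Write g = u/v in lowest terms and put A = a1 y1, D = a2 y2, alpha = A v^2, beta = D u^2.
  Clearing denominators in the relations defining S1 gives an integer f with
  v^3 (4 alpha - 5 beta) = f a2 x1 and u^3 (5 alpha - 4 beta) = f a1 x2, and a prime-by-prime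
  analysis of these two forms shows f | 72 u v. The identity
  alpha^3 (4 alpha - 5 beta)^2 + beta^3 (5 alpha - 4 beta)^2 = (alpha + beta) R^2,
  R = 4 alpha^2 - 7 alpha beta + 4 beta^2, turns the equation of S0 into
  (a1 a2 f)^2 a3 x3^2 y3^3 = -(alpha + beta) R^2; as y3 is square-free and coprime to everything
  else, this forces y3^2 | 900 (alpha + beta). Together with |alpha beta| <= R this yields
  (y1 y2 y3)^2 <= 4665600 |a3| x3^2 y3^3 << B, whereas each y_i >> B^(17/90) makes the left side
  >> B^(17/15). Hence S1 is empty unless B is bounded by an absolute constant, and then its size
  is bounded by that of the box. Finally x3^2 y3^3 is determined by (x1, x2, y1, y2), and since y3
  is square-free it determines (x3, y3), so S1 and S1* have the same size.
\<close>

lemma cube_square_form_identity: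
  fixes \<alpha> \<beta> :: "'a::comm_ring_1"
  shows "\<alpha>^3 * (4*\<alpha> - 5*\<beta>)^2 + \<beta>^3 * (5*\<alpha> - 4*\<beta>)^2
    = (\<alpha> + \<beta>) * (4*\<alpha>^2 - 7*\<alpha>*\<beta> + 4*\<beta>^2)^2"
  by (simp add: power2_eq_square power3_eq_cube algebra_simps)

lemma abs_mult_le_quadratic_form:
  fixes \<alpha> \<beta> :: "'a::linordered_idom"
  shows "\<bar>\<alpha> * \<beta>\<bar> \<le> 4*\<alpha>^2 - 7*\<alpha>*\<beta> + 4*\<beta>^2"
proof -
  have "4*\<alpha>^2 - 7*\<alpha>*\<beta> + 4*\<beta>^2 - \<alpha>*\<beta> = 4*(\<alpha> - \<beta>)^2"
    and "4*\<alpha>^2 - 7*\<alpha>*\<beta> + 4*\<beta>^2 + \<alpha>*\<beta> = 4*\<alpha>^2 + 4*\<beta>^2 - 6*(\<alpha>*\<beta>)"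
    by (simp_all add: power2_eq_square algebra_simps)
  moreover have "0 \<le> \<alpha>^2" "0 \<le> \<beta>^2" "0 \<le> (\<alpha> - \<beta>)^2" by simp_all
  moreover have "\<bar>\<alpha> * \<beta>\<bar> = \<alpha> * \<beta> \<or> \<bar>\<alpha> * \<beta>\<bar> = - (\<alpha> * \<beta>) \<and> \<alpha> * \<beta> < 0"
    by (auto simp: abs_if)
  ultimately show ?thesis by linarith
qed

lemma prime_dvd_both_of_dvd_sum_and_form:
  fixes p \<alpha> \<beta> :: int
  assumes p: "prime p" "p \<noteq> 3" "p \<noteq> 5"
    and sum: "p dvd \<alpha> + \<beta>" and form: "p dvd 4*\<alpha>^2 - 7*\<alpha>*\<beta> + 4*\<beta>^2"
  shows "p dvd \<alpha>" "p dvd \<beta>"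
proof -
  have "15 * (\<alpha> * \<beta>) = 4 * (\<alpha> + \<beta>)^2 - (4*\<alpha>^2 - 7*\<alpha>*\<beta> + 4*\<beta>^2)"
    by (simp add: power2_eq_square algebra_simps)
  also have "p dvd \<dots>" using sum form by (simp add: power2_eq_square)
  finally have "p dvd 15 * (\<alpha> * \<beta>)" .
  moreover have "\<not> p dvd 15"
  proof
    assume "p dvd 15"
    thus False
      using p prime_dvd_mult_iff[of p 3 5] primes_dvd_imp_eq[of p 3] primes_dvd_imp_eq[of p 5]
      by auto
  qed
  ultimately have "p dvd \<alpha> \<or> p dvd \<beta>" using p(1) by (simp add: prime_dvd_mult_iff)
  with sum show "p dvd \<alpha>" "p dvd \<beta>" by (auto simp: dvd_add_right_iff dvd_add_left_iff)
qed

lemma dvd_if_prime_powers_dvd: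
  fixes f T :: int
  assumes "T \<noteq> 0" and dvd: "\<And>p k. prime p \<Longrightarrow> p^k dvd f \<Longrightarrow> p^k dvd T"
  shows "f dvd T"
proof (cases "f = 0")
  case True
  have "(2::int)^(nat \<bar>T\<bar>) dvd T" using dvd[of 2 "nat \<bar>T\<bar>"] True by simp
  hence "\<bar>(2::int)^(nat \<bar>T\<bar>)\<bar> \<le> \<bar>T\<bar>" using \<open>T \<noteq> 0\<close> by (rule dvd_imp_le_int[rotated])
  moreover have "int (nat \<bar>T\<bar>) < 2^(nat \<bar>T\<bar>)" using less_exp[of "nat \<bar>T\<bar>"]
    by (metis of_nat_less_iff of_nat_numeral of_nat_power)
  ultimately show ?thesis by simp
next
  case False
  show ?thesis
  proof (rule multiplicity_le_imp_dvd[OF False])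
    fix p :: int assume p: "prime p"
    have "p ^ multiplicity p f dvd T" using dvd p multiplicity_dvd by blast
    thus "multiplicity p f \<le> multiplicity p T"
      using power_dvd_iff_le_multiplicity \<open>T \<noteq> 0\<close> p by (metis not_prime_unit)
  qed
qed

lemma multiplicity_squarefree_eq_1:
  fixes p y :: "'a :: factorial_semiring_multiplicative"
  assumes "prime p" "p dvd y" "squarefree y" "y \<noteq> 0"
  shows "multiplicity p y = 1"
proof -
  have "multiplicity p y \<le> 1" using assms squarefree_factorial_semiring'' by blast
  moreover have "1 \<le> multiplicity p y"
    using multiplicity_geI[OF assms(4), of p 1] assms(1,2) not_prime_unit by auto
  ultimately show ?thesis by simp
qed

lemma prime_square_dvd_of_cube_relation:
  fixes e a x y S R p :: int
  assumes p: "prime p" "p dvd y" and "squarefree y" "\<not> p dvd e" "\<not> p dvd a"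
    and eq: "e^2 * (a * x^2 * y^3) = - (S * R^2)"
    and nonzero: "e \<noteq> 0" "a \<noteq> 0" "x \<noteq> 0" "y \<noteq> 0"
    and coprime_SR: "p dvd S \<Longrightarrow> \<not> p dvd R"
  shows "p^2 dvd S"
proof (cases "p dvd S")
  case True
  have "p^3 dvd e^2 * (a * x^2 * y^3)" using p(2) by (simp add: dvd_power_same)
  hence "p^3 dvd S * R^2" using eq by simp
  moreover have "coprime (p^3) (R^2)" using prime_imp_coprime[OF p(1) coprime_SR[OF True]] by simp
  ultimately have "p^3 dvd S" by (simp add: coprime_dvd_mult_left_iff)
  thus ?thesis by (rule power_le_dvd) simp
next
  case False
  have "S \<noteq> 0" "R \<noteq> 0" using eq nonzero by auto
  have "multiplicity p (e^2 * (a * x^2 * y^3)) = 2 * multiplicity p x + 3"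
    using nonzero \<open>\<not> p dvd e\<close> \<open>\<not> p dvd a\<close> prime_imp_prime_elem[OF p(1)]
      multiplicity_squarefree_eq_1[OF p \<open>squarefree y\<close> \<open>y \<noteq> 0\<close>]
    by (simp add: prime_elem_multiplicity_mult_distrib prime_elem_multiplicity_power_distrib
        not_dvd_imp_multiplicity_0)
  moreover have "multiplicity p (- (S * R^2)) = 2 * multiplicity p R"
    using \<open>S \<noteq> 0\<close> \<open>R \<noteq> 0\<close> False prime_imp_prime_elem[OF p(1)]
    by (simp add: prime_elem_multiplicity_mult_distrib prime_elem_multiplicity_power_distrib
        not_dvd_imp_multiplicity_0)
  ultimately have "2 * multiplicity p x + 3 = 2 * multiplicity p R" using eq by simp
  hence False by presburger
  thus ?thesis ..
qed

lemma squarefree_square_dvd_900: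
  fixes y S :: int
  assumes "squarefree y" "y \<noteq> 0" "S \<noteq> 0"
    and large_primes: "\<And>p. prime p \<Longrightarrow> p dvd y \<Longrightarrow> p \<notin> {2, 3, 5} \<Longrightarrow> p^2 dvd S"
  shows "y^2 dvd 900 * S"
proof (rule multiplicity_le_imp_dvd)
  show "y^2 \<noteq> 0" using assms by simp
  fix p :: int assume p: "prime p"
  show "multiplicity p (y^2) \<le> multiplicity p (900 * S)"
  proof (cases "p dvd y")
    case False
    hence "\<not> p dvd y^2" using p prime_dvd_power by blast
    thus ?thesis by (simp add: not_dvd_imp_multiplicity_0)
  next
    case True
    have "p^2 dvd 900 * S"
    proof (cases "p \<in> {2, 3, 5}")
      case True
      hence "p^2 dvd 900" by auto
      thus ?thesis by (simp add: dvd_mult2)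
    next
      case False
      thus ?thesis using large_primes[OF p \<open>p dvd y\<close>] by (simp add: dvd_mult)
    qed
    hence "2 \<le> multiplicity p (900 * S)"
      using multiplicity_geI p not_prime_unit \<open>S \<noteq> 0\<close> by (metis mult_eq_0_iff zero_neq_numeral)
    moreover have "multiplicity p (y^2) = 2"
      using multiplicity_squarefree_eq_1[OF p True assms(1,2)]
        prime_elem_multiplicity_power_distrib[OF prime_imp_prime_elem[OF p] \<open>y \<noteq> 0\<close>, of 2] by simp
    ultimately show ?thesis by simp
  qed
qed

lemma squarefree_cube_factor_unique:
  fixes x y x' y' :: int
  assumes "x > 0" "y > 0" "x' > 0" "y' > 0" "squarefree y" "squarefree y'"
    and eq: "x^2 * y^3 = x'^2 * y'^3"
  shows "x = x'" "y = y'"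
proof -
  have "normalize y = normalize y'"
  proof (rule multiplicity_eq_imp_eq)
    show "y \<noteq> 0" "y' \<noteq> 0" using assms by auto
    fix p :: int assume p: "prime p"
    have val: "multiplicity p (a^2 * b^3) = 2 * multiplicity p a + 3 * multiplicity p b"
      if "a \<noteq> 0" "b \<noteq> 0" for a b :: int
      using that prime_imp_prime_elem[OF p]
      by (simp add: prime_elem_multiplicity_mult_distrib prime_elem_multiplicity_power_distrib)
    have "2 * multiplicity p x + 3 * multiplicity p y = 2 * multiplicity p x' + 3 * multiplicity p y'"
      using val[of x y] val[of x' y'] eq assms by simp
    moreover have "multiplicity p y \<le> 1" "multiplicity p y' \<le> 1"
      using assms p squarefree_factorial_semiring'' by (metis less_irrefl)+
    ultimately show "multiplicity p y = multiplicity p y'" by presburger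
  qed
  thus "y = y'" using assms by simp
  hence "x^2 = x'^2" using eq assms by simp
  thus "x = x'" using assms by (simp add: power2_eq_iff_nonneg)
qed

lemma coprime_of_ternary_cube_relation:
  fixes x1 y1 x2 y2 x3 y3 :: nat and c1 c2 c3 :: int
  assumes eq: "c1 * int x1^2 * int y1^3 + c2 * int x2^2 * int y2^3 + c3 * int x3^2 * int y3^3 = 0"
    and gcd: "gcd (gcd (x1*y1) (x2*y2)) (x3*y3) = 1" and "coprime c3 (int (x1*y1))"
  shows "coprime (x1*y1) (x2*y2)"
proof (rule ccontr)
  assume "\<not> coprime (x1*y1) (x2*y2)"
  then obtain p where p: "prime p" "p dvd x1*y1" "p dvd x2*y2"
    using prime_factor_nat[of "gcd (x1*y1) (x2*y2)"] by (auto simp: coprime_iff_gcd_eq_1)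
  have "x1*y1 dvd x1^2*y1^3" "x2*y2 dvd x2^2*y2^3" by (simp_all add: power2_eq_square power3_eq_cube)
  hence "int p dvd int x1^2 * int y1^3" "int p dvd int x2^2 * int y2^3"
    using p(2,3) dvd_trans by (simp_all flip: of_nat_power of_nat_mult) blast+
  moreover have "c3 * (int x3^2 * int y3^3) = - (c1 * (int x1^2 * int y1^3) + c2 * (int x2^2 * int y2^3))"
    using eq by (simp add: algebra_simps)
  ultimately have "int p dvd c3 * (int x3^2 * int y3^3)" by (simp add: dvd_add dvd_mult)
  moreover have "coprime (int (x1*y1)) c3" using \<open>coprime c3 (int (x1*y1))\<close> by (rule coprime_commute[THEN iffD1])
  hence "coprime (int p) c3" using p(2) coprime_divisors[OF _ dvd_refl, of "int p" "int (x1*y1)" c3]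
    by (simp only: int_dvd_int_iff)
  ultimately have "p dvd x3^2 * y3^3" by (simp add: coprime_dvd_mult_right_iff flip: of_nat_power of_nat_mult)
  hence "p dvd x3*y3" using p(1) by (auto simp: prime_dvd_mult_iff dest: prime_dvd_power)
  hence "p dvd 1" using p(2,3) gcd by (metis gcd_greatest)
  thus False using p(1) by simp
qed

lemma common_factor_of_cross_relation:
  fixes a1 a2 x1 x2 L M :: int
  assumes rel: "a2 * x1 * L = a1 * x2 * M"
    and "coprime x1 x2" "coprime a1 x1" "coprime a2 x2" "coprime a1 a2"
    and "a1 \<noteq> 0" "a2 \<noteq> 0" "x1 \<noteq> 0"
  obtains f where "M = f * (a2 * x1)" "L = f * (a1 * x2)"
proof -
  have "x2 * (a1 * M) = x1 * (a2 * L)" using rel by (simp add: mult_ac)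
  hence "x1 dvd x2 * (a1 * M)" by simp
  hence "x1 dvd a1 * M" using \<open>coprime x1 x2\<close> by (simp add: coprime_dvd_mult_right_iff)
  then obtain e where e1: "a1 * M = x1 * e" by blast
  have "x1 * (a2 * L) = x1 * (x2 * e)" using rel e1 by (simp add: algebra_simps)
  hence e2: "a2 * L = x2 * e" using \<open>x1 \<noteq> 0\<close> by simp
  have "a1 dvd x1 * e" "a2 dvd x2 * e" unfolding e1[symmetric] e2[symmetric] by simp_all
  hence "a1 dvd e" "a2 dvd e" using \<open>coprime a1 x1\<close> \<open>coprime a2 x2\<close>
    by (simp_all add: coprime_dvd_mult_right_iff)
  hence "a1 * a2 dvd e" using \<open>coprime a1 a2\<close> by (simp add: divides_mult)
  then obtain f where "e = a1 * a2 * f" by blast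
  hence "a1 * M = a1 * (f * (a2 * x1))" "a2 * L = a2 * (f * (a1 * x2))"
    using e1 e2 by (simp_all add: algebra_simps)
  hence "M = f * (a2 * x1)" "L = f * (a1 * x2)" using \<open>a1 \<noteq> 0\<close> \<open>a2 \<noteq> 0\<close> by simp_all
  thus ?thesis by (rule that)
qed

lemma rational_relations_clear_denominators:
  fixes g \<nu> :: rat and A D s t :: int
  assumes "g \<noteq> 0" "s \<noteq> 0"
    and rel1: "of_int s = \<nu> * (4 * of_int A - 5 * g^2 * of_int D)"
    and rel2: "of_int t = \<nu> * g^3 * (5 * of_int A - 4 * g^2 * of_int D)"
  obtains u v where "coprime u v" "v > 0" "u \<noteq> 0"
    "s * (u^3 * (5*A*v^2 - 4*D*u^2)) = t * (v^3 * (4*A*v^2 - 5*D*u^2))"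
proof -
  obtain u v where q: "quotient_of g = (u, v)" by (cases "quotient_of g") auto
  have "v > 0" "coprime u v" using quotient_of_denom_pos[OF q] quotient_of_coprime[OF q] by auto
  have gv: "of_int u = g * of_int v" using quotient_of_div[OF q] \<open>v > 0\<close> by simp
  hence "u \<noteq> 0" using \<open>g \<noteq> 0\<close> \<open>v > 0\<close> by auto
  have "of_int (s * v^2) = \<nu> * (4 * of_int A - 5 * g^2 * of_int D) * of_int v^2" using rel1 by simp
  also have "\<dots> = \<nu> * of_int (4*A*v^2 - 5*D*u^2)" by (simp add: gv algebra_simps power_mult_distrib)
  finally have s: "of_int (s * v^2) = \<nu> * of_int (4*A*v^2 - 5*D*u^2)" .
  have "of_int (t * v^5) = \<nu> * g^3 * (5 * of_int A - 4 * g^2 * of_int D) * of_int v^5" using rel2 by simp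
  also have "\<dots> = \<nu> * of_int (u^3 * (5*A*v^2 - 4*D*u^2))" by (simp add: gv algebra_simps power_mult_distrib)
  finally have t: "of_int (t * v^5) = \<nu> * of_int (u^3 * (5*A*v^2 - 4*D*u^2))" .
  have "of_int (v^2 * (s * (u^3 * (5*A*v^2 - 4*D*u^2))))
      = (of_int (s * v^2) * of_int (u^3 * (5*A*v^2 - 4*D*u^2)) :: rat)"
    by (simp add: algebra_simps)
  also have "\<dots> = of_int (t * v^5) * of_int (4*A*v^2 - 5*D*u^2)" by (simp only: s t) simp
  also have "\<dots> = of_int (v^2 * (t * (v^3 * (4*A*v^2 - 5*D*u^2))))" by (simp add: algebra_simps)
  finally have "v^2 * (s * (u^3 * (5*A*v^2 - 4*D*u^2))) = v^2 * (t * (v^3 * (4*A*v^2 - 5*D*u^2)))"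
    by (simp only: of_int_eq_iff)
  thus ?thesis using that \<open>coprime u v\<close> \<open>v > 0\<close> \<open>u \<noteq> 0\<close> by simp
qed

lemma odd_prime_square_not_dvd_form:
  fixes A E u v f p :: int
  assumes p: "prime p" "p \<noteq> 2" and "p dvd u" "coprime u v" "squarefree A"
    and f: "f dvd v^3 * (4*A*v^2 - E*u^2)"
  shows "\<not> p^2 dvd f"
proof
  assume "p^2 dvd f"
  have "coprime p v" using \<open>p dvd u\<close> \<open>coprime u v\<close> by (rule coprime_divisors[OF _ dvd_refl])
  moreover have "coprime p 2" using p primes_dvd_imp_eq[of 2 p] by auto
  ultimately have "coprime p (2*v)" by simp
  hence cop: "coprime (p^2) ((2*v)^2)" by (metis coprime_power_left_iff coprime_power_right_iff)
  have "p^2 dvd v^3 * (4*A*v^2 - E*u^2)" using \<open>p^2 dvd f\<close> f by (rule dvd_trans)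
  hence "p^2 dvd 4*A*v^2 - E*u^2" using \<open>coprime p v\<close> by (simp add: coprime_dvd_mult_right_iff)
  moreover have "p^2 dvd E*u^2" using \<open>p dvd u\<close> by (simp add: dvd_power_same)
  ultimately have "p^2 dvd (2*v)^2 * A"
    using dvd_add[of _ "4*A*v^2 - E*u^2" "E*u^2"] by (simp add: power_mult_distrib mult_ac)
  hence "p^2 dvd A" using cop by (simp add: coprime_dvd_mult_right_iff)
  hence "p dvd 1" using \<open>squarefree A\<close> by (rule squarefreeD[rotated])
  thus False using p by (simp add: not_prime_unit)
qed

lemma dvd_forms_imp_dvd_9_coefficients:
  fixes A D u v m :: int
  assumes P: "m dvd 4*A*v^2 - 5*D*u^2" and Q: "m dvd 5*A*v^2 - 4*D*u^2"
  shows "m dvd 9*A*v^2" "m dvd 9*D*u^2"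
proof -
  have "9*A*v^2 = 5*(5*A*v^2 - 4*D*u^2) - 4*(4*A*v^2 - 5*D*u^2)"
    and "9*D*u^2 = 4*(5*A*v^2 - 4*D*u^2) - 5*(4*A*v^2 - 5*D*u^2)" by (simp_all add: algebra_simps)
  thus "m dvd 9*A*v^2" "m dvd 9*D*u^2" using P Q by (metis dvd_diff dvd_mult)+
qed

lemma prime_power_dvd_forms_imp_dvd_9:
  fixes A D u v f p :: int
  assumes p: "prime p" "\<not> p dvd u" "\<not> p dvd v" and "coprime A D"
    and fP: "f dvd v^3 * (4*A*v^2 - 5*D*u^2)" and fQ: "f dvd u^3 * (5*A*v^2 - 4*D*u^2)"
    and "p^k dvd f"
  shows "p^k dvd 9"
proof -
  have cu: "coprime (p^k) u" and cv: "coprime (p^k) v" using p by (simp_all add: prime_imp_coprime)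
  have P: "p^k dvd 4*A*v^2 - 5*D*u^2" using dvd_trans[OF \<open>p^k dvd f\<close> fP] cv
    by (simp add: coprime_dvd_mult_right_iff)
  have Q: "p^k dvd 5*A*v^2 - 4*D*u^2" using dvd_trans[OF \<open>p^k dvd f\<close> fQ] cu
    by (simp add: coprime_dvd_mult_right_iff)
  have A: "p^k dvd 9*A" and D: "p^k dvd 9*D"
    using dvd_forms_imp_dvd_9_coefficients[OF P Q] cu cv by (simp_all add: coprime_dvd_mult_left_iff)
  have "gcd (9*A) (9*D) = 9" using \<open>coprime A D\<close> by (simp add: gcd_mult_left)
  with A D show ?thesis by (metis gcd_greatest)
qed

lemma sixteen_not_dvd_form_divisor:
  fixes A D u v f :: int
  assumes u: "even u" and "coprime u v" "squarefree A" "coprime A D"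
    and fP: "f dvd v^3 * (4*A*v^2 - 5*D*u^2)" and fQ: "f dvd u^3 * (5*A*v^2 - 4*D*u^2)"
  shows "\<not> 16 dvd f"
proof
  assume "16 dvd f"
  have "odd v" using u \<open>coprime u v\<close> by (auto dest: not_coprimeI[of 2 u v])
  hence "coprime 16 (v^3)" using coprime_power_left_iff[of 2 4 "v^3"] by simp
  hence P: "16 dvd 4*A*v^2 - 5*D*u^2"
    using dvd_trans[OF \<open>16 dvd f\<close> fP] by (simp add: coprime_dvd_mult_right_iff)
  have "\<not> 4 dvd u"
  proof
    assume "4 dvd u"
    hence "16 dvd 5*D*u^2" by (auto simp: power2_eq_square)
    hence "4 * 4 dvd 4 * (A*v^2)" using P dvd_add[of 16 "4*A*v^2 - 5*D*u^2" "5*D*u^2"] by (simp add: mult_ac)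
    hence "4 dvd A*v^2" by (subst (asm) dvd_times_left_cancel_iff) simp_all
    moreover have "coprime 4 (v^2)" using \<open>odd v\<close> coprime_power_left_iff[of 2 2 "v^2"] by simp
    ultimately have "2^2 dvd A" by (simp add: coprime_dvd_mult_left_iff)
    hence "(2::int) dvd 1" using \<open>squarefree A\<close> by (rule squarefreeD[rotated])
    thus False by simp
  qed
  then obtain w where w: "u = 2*w" "odd w" using u by (auto simp: dvd_def)
  have "4 * (A*v^2 - 5*D*w^2) = 4*A*v^2 - 5*D*u^2" using w by (simp add: power2_eq_square algebra_simps)
  hence "4 * 4 dvd 4 * (A*v^2 - 5*D*w^2)" using P by (simp only: numeral_times_numeral) simp
  hence "2 * 2 dvd A*v^2 - 5*D*w^2" by (subst (asm) dvd_times_left_cancel_iff) simp_all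
  hence "even (A*v^2 - 5*D*w^2)" using dvd_mult_left by blast
  moreover have "\<not> (even A \<and> even D)" using \<open>coprime A D\<close> by (auto dest: not_coprimeI[of 2 A D])
  ultimately have "odd A" using \<open>odd v\<close> w(2) by auto
  hence "odd (5*A*v^2 - 4*D*u^2)" using \<open>odd v\<close> by simp
  hence "coprime 16 (5*A*v^2 - 4*D*u^2)" using coprime_power_left_iff[of "2::int" 4] by simp
  hence "16 dvd u^3" using dvd_trans[OF \<open>16 dvd f\<close> fQ] by (simp add: coprime_dvd_mult_left_iff)
  hence "8 * 2 dvd 8 * w^3" using w by (simp add: power_mult_distrib)
  hence "even (w^3)" by (subst (asm) dvd_times_left_cancel_iff) simp_all
  thus False using w(2) by simp
qed

lemma prime_power_dvd_form_divisor:
  fixes A D u v f p :: int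
  assumes p: "prime p" "p dvd u" and "coprime u v" "squarefree A" "coprime A D"
    and fP: "f dvd v^3 * (4*A*v^2 - 5*D*u^2)" and fQ: "f dvd u^3 * (5*A*v^2 - 4*D*u^2)"
    and "p^k dvd f"
  shows "p^k dvd 8*u"
proof (cases "p = 2")
  case True
  have "\<not> 2^4 dvd f"
    using sixteen_not_dvd_form_divisor[OF _ assms(3-7)] p True by simp
  hence "k < 4" using \<open>p^k dvd f\<close> True by (meson power_le_dvd not_less)
  hence "p^k dvd 2^3" using le_imp_power_dvd[of k 3 p] True by simp
  thus ?thesis by (simp add: dvd_mult2)
next
  case False
  have "\<not> p^2 dvd f" using odd_prime_square_not_dvd_form[OF p(1) False p(2) assms(3,4) fP] .
  hence "k < 2" using \<open>p^k dvd f\<close> by (meson power_le_dvd not_less)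
  hence "k = 0 \<or> k = 1" by linarith
  hence "p^k dvd u" using p(2) by auto
  thus ?thesis by (simp add: dvd_mult)
qed

lemma form_divisor_dvd_72:
  fixes A D u v f :: int
  assumes "coprime u v" "squarefree A" "squarefree D" "coprime A D" "u \<noteq> 0" "v \<noteq> 0"
    and fP: "f dvd v^3 * (4*A*v^2 - 5*D*u^2)" and fQ: "f dvd u^3 * (5*A*v^2 - 4*D*u^2)"
  shows "f dvd 72*u*v"
proof (rule dvd_if_prime_powers_dvd)
  show "72*u*v \<noteq> 0" using assms by simp
  fix p :: int and k assume p: "prime p" and "p^k dvd f"
  \<comment> \<open>exchanging (u, A) with (v, D) negates both forms\<close>
  have fP': "f dvd u^3 * (4*D*u^2 - 5*A*v^2)" and fQ': "f dvd v^3 * (5*D*u^2 - 4*A*v^2)"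
    using fP fQ dvd_minus_iff by (metis minus_diff_eq mult_minus_right)+
  consider "p dvd u" | "p dvd v" | "\<not> p dvd u" "\<not> p dvd v" by blast
  then show "p^k dvd 72*u*v"
  proof cases
    case 1
    have "p^k dvd 8*u"
      using prime_power_dvd_form_divisor[OF p 1 assms(1,2,4) fP fQ \<open>p^k dvd f\<close>] .
    thus ?thesis by (rule dvd_trans) (simp add: mult_ac)
  next
    case 2
    have "coprime v u" "coprime D A" using assms by (simp_all add: ac_simps)
    hence "p^k dvd 8*v"
      using prime_power_dvd_form_divisor[OF p 2 _ assms(3) _ fP' fQ' \<open>p^k dvd f\<close>] by blast
    thus ?thesis by (rule dvd_trans) (simp add: mult_ac)
  next
    case 3
    have "p^k dvd 9"
      using prime_power_dvd_forms_imp_dvd_9[OF p 3 assms(4) fP fQ \<open>p^k dvd f\<close>] .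
    thus ?thesis by (rule dvd_trans) (simp add: mult_ac)
  qed
qed

lemma prime_dvd_coefficient_of_dvd_forms:
  fixes A D u v p :: int
  assumes p: "prime p" "p \<noteq> 2" "p \<noteq> 3" and "coprime u v"
    and pP: "p dvd v^3 * (4*A*v^2 - 5*D*u^2)" and pQ: "p dvd u^3 * (5*A*v^2 - 4*D*u^2)"
  shows "p dvd A \<or> p dvd D"
proof -
  have "\<not> p dvd 4" "\<not> p dvd 9"
    using p primes_dvd_imp_eq[of p 2] primes_dvd_imp_eq[of p 3]
      prime_dvd_power[of p 2 2] prime_dvd_power[of p 3 2] by auto
  consider "p dvd u" | "p dvd v" | "\<not> p dvd u" "\<not> p dvd v" by blast
  then show ?thesis
  proof cases
    case 1
    hence "\<not> p dvd v" using \<open>coprime u v\<close> p(1) by (meson coprime_common_divisor not_prime_unit)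
    hence "p dvd 4*A*v^2 - 5*D*u^2" using pP p(1) by (simp add: prime_dvd_mult_iff prime_dvd_power_iff)
    moreover have "p dvd 5*D*u^2" using 1 by (simp add: power2_eq_square)
    ultimately have "p dvd (4*A*v^2 - 5*D*u^2) + 5*D*u^2" by (rule dvd_add)
    hence "p dvd 4*A*v^2" by simp
    thus ?thesis using \<open>\<not> p dvd 4\<close> \<open>\<not> p dvd v\<close> p(1) by (simp add: prime_dvd_mult_iff prime_dvd_power_iff)
  next
    case 2
    hence "\<not> p dvd u" using \<open>coprime u v\<close> p(1) by (meson coprime_common_divisor not_prime_unit)
    hence "p dvd 5*A*v^2 - 4*D*u^2" using pQ p(1) by (simp add: prime_dvd_mult_iff prime_dvd_power_iff)
    moreover have "p dvd 5*A*v^2" using 2 by (simp add: power2_eq_square)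
    ultimately have "p dvd 5*A*v^2 - (5*A*v^2 - 4*D*u^2)" by (rule dvd_diff[rotated])
    hence "p dvd 4*D*u^2" by simp
    thus ?thesis using \<open>\<not> p dvd 4\<close> \<open>\<not> p dvd u\<close> p(1) by (simp add: prime_dvd_mult_iff prime_dvd_power_iff)
  next
    case 3
    hence "p dvd 4*A*v^2 - 5*D*u^2" "p dvd 5*A*v^2 - 4*D*u^2"
      using pP pQ p(1) by (simp_all add: prime_dvd_mult_iff prime_dvd_power_iff)
    hence "p dvd 9*A*v^2" by (rule dvd_forms_imp_dvd_9_coefficients)
    thus ?thesis using \<open>\<not> p dvd 9\<close> 3 p(1) by (simp add: prime_dvd_mult_iff prime_dvd_power_iff)
  qed
qed

lemma cube_relation_of_descent:
  fixes a1 a2 a3 x1 x2 x3 y1 y2 y3 u v f \<alpha> \<beta> :: int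
  assumes eq: "a1 * x1^2 * y1^3 + a2 * x2^2 * y2^3 + a3 * x3^2 * y3^3 = 0"
    and fP: "v^3 * (4*(a1 * y1)*v^2 - 5*(a2 * y2)*u^2) = f * (a2 * x1)"
    and fQ: "u^3 * (5*(a1 * y1)*v^2 - 4*(a2 * y2)*u^2) = f * (a1 * x2)"
    and \<alpha>: "\<alpha> = a1 * y1 * v^2" and \<beta>: "\<beta> = a2 * y2 * u^2"
  shows "(a1*a2*f)^2 * (a3 * x3^2 * y3^3) = - ((\<alpha> + \<beta>) * (4*\<alpha>^2 - 7*\<alpha>*\<beta> + 4*\<beta>^2)^2)"
proof -
  have "(a1*a2*f)^2 * (a1 * x1^2 * y1^3) = (a1 * y1)^3 * (f * (a2 * x1))^2"
    by (simp add: power2_eq_square power3_eq_cube mult_ac)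
  also have "\<dots> = (a1 * y1 * v^2)^3 * (4*(a1 * y1)*v^2 - 5*(a2 * y2)*u^2)^2"
    unfolding fP[symmetric] by (simp add: power_mult_distrib mult_ac flip: power_mult)
  finally have 1: "(a1*a2*f)^2 * (a1 * x1^2 * y1^3) = \<alpha>^3 * (4*\<alpha> - 5*\<beta>)^2"
    unfolding \<alpha> \<beta> by (simp add: mult_ac)
  have "(a1*a2*f)^2 * (a2 * x2^2 * y2^3) = (a2 * y2)^3 * (f * (a1 * x2))^2"
    by (simp add: power2_eq_square power3_eq_cube mult_ac)
  also have "\<dots> = (a2 * y2 * u^2)^3 * (5*(a1 * y1)*v^2 - 4*(a2 * y2)*u^2)^2"
    unfolding fQ[symmetric] by (simp add: power_mult_distrib mult_ac flip: power_mult)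
  finally have 2: "(a1*a2*f)^2 * (a2 * x2^2 * y2^3) = \<beta>^3 * (5*\<alpha> - 4*\<beta>)^2"
    unfolding \<alpha> \<beta> by (simp add: mult_ac)
  have "a3 * x3^2 * y3^3 = - (a1 * x1^2 * y1^3 + a2 * x2^2 * y2^3)" using eq by linarith
  hence "(a1*a2*f)^2 * (a3 * x3^2 * y3^3)
      = - ((a1*a2*f)^2 * (a1 * x1^2 * y1^3) + (a1*a2*f)^2 * (a2 * x2^2 * y2^3))"
    by (simp only: distrib_left mult_minus_right)
  also have "\<dots> = - ((\<alpha> + \<beta>) * (4*\<alpha>^2 - 7*\<alpha>*\<beta> + 4*\<beta>^2)^2)"
    unfolding 1 2 cube_square_form_identity ..
  finally show ?thesis .
qed

(* 4665600 = 900 * 72^2 *)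
lemma size_bound_of_cube_relation:
  fixes c f u v Y z S R W :: int
  assumes "c \<noteq> 0" "u \<noteq> 0" "v \<noteq> 0" "S \<noteq> 0"
    and "f dvd 72*u*v" "z^2 dvd 900*S" "\<bar>c * u^2 * v^2 * Y\<bar> \<le> R"
    and rel: "(c*f)^2 * W = - (S * R^2)"
  shows "(Y * z)^2 \<le> 4665600 * \<bar>W\<bar>"
proof -
  have "\<bar>f\<bar> \<le> \<bar>72*u*v\<bar>" using \<open>f dvd 72*u*v\<close> assms(2,3) by (simp add: dvd_imp_le_int)
  hence f: "f^2 \<le> 5184 * (u^2*v^2)" using abs_le_square_iff[of f "72*u*v"] by (simp add: power_mult_distrib)
  have z: "z^2 \<le> 900 * \<bar>S\<bar>" using dvd_imp_le_int[OF _ \<open>z^2 dvd 900*S\<close>] \<open>S \<noteq> 0\<close> by (simp add: abs_mult)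
  have R: "(c * u^2 * v^2 * Y)^2 \<le> R^2" using abs_le_square_iff assms(7) by fastforce
  have cuv: "c^2 * (u^2 * v^2) > 0" using assms(1-3) by simp
  have "c^2 * (u^2 * v^2) * (u^2 * v^2 * (Y * z)^2) = (c * u^2 * v^2 * Y)^2 * z^2"
    by (simp add: power2_eq_square mult_ac)
  also have "\<dots> \<le> R^2 * (900 * \<bar>S\<bar>)" using R z by (intro mult_mono) simp_all
  also have "\<dots> = 900 * c^2 * f^2 * \<bar>W\<bar>"
    using arg_cong[OF rel, of abs] by (simp add: abs_mult power_mult_distrib mult_ac)
  also have "\<dots> \<le> 900 * c^2 * (5184 * (u^2*v^2)) * \<bar>W\<bar>" using f by (intro mult_right_mono mult_left_mono) simp_all
  also have "\<dots> = c^2 * (u^2 * v^2) * (4665600 * \<bar>W\<bar>)" by simp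
  finally have "u^2 * v^2 * (Y * z)^2 \<le> 4665600 * \<bar>W\<bar>" using cuv by (rule mult_left_le_imp_le)
  moreover have "1 * (Y * z)^2 \<le> u^2 * v^2 * (Y * z)^2"
    using assms(2,3) by (intro mult_right_mono) (simp_all add: int_one_le_iff_zero_less)
  ultimately show ?thesis by simp
qed

lemma mem_S0_iff:
  "(x1, x2, x3, y1, y2, y3) \<in> S0 a1 a2 a3 X1 X2 X3 Y1 Y2 Y3 \<longleftrightarrow>
       0 < x1 \<and> 0 < x2 \<and> 0 < x3 \<and> 0 < y1 \<and> 0 < y2 \<and> 0 < y3 \<and>
       real X1 / 2 < real x1 \<and> x1 \<le> X1 \<and>
       real X2 / 2 < real x2 \<and> x2 \<le> X2 \<and>
       real X3 / 2 < real x3 \<and> x3 \<le> X3 \<and>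
       real Y1 / 2 < real y1 \<and> y1 \<le> Y1 \<and>
       real Y2 / 2 < real y2 \<and> y2 \<le> Y2 \<and>
       real Y3 / 2 < real y3 \<and> y3 \<le> Y3 \<and>
       a1 * int x1 ^ 2 * int y1 ^ 3 + a2 * int x2 ^ 2 * int y2 ^ 3
         + a3 * int x3 ^ 2 * int y3 ^ 3 = 0 \<and>
       gcd (gcd (x1 * y1) (x2 * y2)) (x3 * y3) = 1 \<and>
       gcd (a1 * a2 * a3) (int (x1 * x2 * x3 * y1 * y2 * y3)) = 1 \<and>
       squarefree (a1 * int y1) \<and> squarefree (a2 * int y2) \<and> squarefree (a3 * int y3)"
  unfolding S0_def by (simp only: mem_Collect_eq prod.case)

lemma S0_coprime_coefficient:
  assumes "(x1, x2, x3, y1, y2, y3) \<in> S0 a1 a2 a3 X1 X2 X3 Y1 Y2 Y3"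
    and "a dvd a1 * a2 * a3" "n dvd x1 * x2 * x3 * y1 * y2 * y3"
  shows "coprime a (int n)"
proof -
  have "coprime (a1 * a2 * a3) (int (x1 * x2 * x3 * y1 * y2 * y3))"
    using assms(1) unfolding mem_S0_iff coprime_iff_gcd_eq_1 by blast
  moreover have "int n dvd int (x1 * x2 * x3 * y1 * y2 * y3)" using assms(3) by (simp only: int_dvd_int_iff)
  ultimately show ?thesis using assms(2) coprime_divisors by blast
qed

lemma S0_pairwise_coprime:
  assumes "(x1, x2, x3, y1, y2, y3) \<in> S0 a1 a2 a3 X1 X2 X3 Y1 Y2 Y3"
  shows "coprime (x1*y1) (x2*y2)" "coprime (x1*y1) (x3*y3)" "coprime (x2*y2) (x3*y3)"
proof -
  have eq: "a1 * int x1^2 * int y1^3 + a2 * int x2^2 * int y2^3 + a3 * int x3^2 * int y3^3 = 0"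
    and gcd: "gcd (gcd (x1*y1) (x2*y2)) (x3*y3) = 1" using assms unfolding mem_S0_iff by blast+
  have "coprime a3 (int (x1*y1))" "coprime a2 (int (x1*y1))" "coprime a1 (int (x2*y2))"
    by (rule S0_coprime_coefficient[OF assms]; simp)+
  show "coprime (x1*y1) (x2*y2)"
    using eq gcd \<open>coprime a3 (int (x1*y1))\<close> by (rule coprime_of_ternary_cube_relation)
  show "coprime (x1*y1) (x3*y3)"
  proof (rule coprime_of_ternary_cube_relation)
    show "a1 * int x1^2 * int y1^3 + a3 * int x3^2 * int y3^3 + a2 * int x2^2 * int y2^3 = 0"
      using eq by linarith
    show "gcd (gcd (x1*y1) (x3*y3)) (x2*y2) = 1" using gcd by (simp only: ac_simps)
  qed fact
  show "coprime (x2*y2) (x3*y3)"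
  proof (rule coprime_of_ternary_cube_relation)
    show "a2 * int x2^2 * int y2^3 + a3 * int x3^2 * int y3^3 + a1 * int x1^2 * int y1^3 = 0"
      using eq by linarith
    show "gcd (gcd (x2*y2) (x3*y3)) (x1*y1) = 1" using gcd by (simp only: ac_simps)
  qed fact
qed

lemma mem_S1_iff:
  "(x1, x2, x3, y1, y2, y3) \<in> S1 a1 a2 a3 X1 X2 X3 Y1 Y2 Y3 \<longleftrightarrow>
     (x1, x2, x3, y1, y2, y3) \<in> S0 a1 a2 a3 X1 X2 X3 Y1 Y2 Y3 \<and>
     (\<exists>g \<nu> :: rat. g \<noteq> 0 \<and> \<nu> \<noteq> 0 \<and>
         of_int a2 * of_nat x1 = \<nu> * (4 * of_int a1 * of_nat y1 - 5 * g ^ 2 * of_int a2 * of_nat y2) \<and>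
         of_int a1 * of_nat x2 = \<nu> * g ^ 3 * (5 * of_int a1 * of_nat y1 - 4 * g ^ 2 * of_int a2 * of_nat y2))"
  unfolding S1_def by (simp only: mem_Collect_eq prod.case)

lemma S1_descent:
  fixes a1 a2 a3 :: int
  assumes "a1 \<noteq> 0" "a2 \<noteq> 0" "coprime a1 a2"
    and mem: "(x1, x2, x3, y1, y2, y3) \<in> S1 a1 a2 a3 X1 X2 X3 Y1 Y2 Y3"
  obtains u v f :: int where "coprime u v" "v > 0" "u \<noteq> 0" "f \<noteq> 0"
    "v^3 * (4*(a1 * int y1)*v^2 - 5*(a2 * int y2)*u^2) = f * (a2 * int x1)"
    "u^3 * (5*(a1 * int y1)*v^2 - 4*(a2 * int y2)*u^2) = f * (a1 * int x2)"
proof -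
  have S0: "(x1, x2, x3, y1, y2, y3) \<in> S0 a1 a2 a3 X1 X2 X3 Y1 Y2 Y3"
    using mem unfolding mem_S1_iff by blast
  obtain g \<nu> :: rat where "g \<noteq> 0"
    and r1: "of_int (a2 * int x1) = \<nu> * (4 * of_int (a1 * int y1) - 5 * g^2 * of_int (a2 * int y2))"
    and r2: "of_int (a1 * int x2) = \<nu> * g^3 * (5 * of_int (a1 * int y1) - 4 * g^2 * of_int (a2 * int y2))"
    using mem unfolding mem_S1_iff by (auto simp: mult.assoc)
  have "0 < x1" using S0 unfolding mem_S0_iff by blast
  hence "a2 * int x1 \<noteq> 0" using \<open>a2 \<noteq> 0\<close> by simp
  then obtain u v where uv: "coprime u v" "v > 0" "u \<noteq> 0"
    and rel: "a2 * int x1 * (u^3 * (5*(a1 * int y1)*v^2 - 4*(a2 * int y2)*u^2))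
      = a1 * int x2 * (v^3 * (4*(a1 * int y1)*v^2 - 5*(a2 * int y2)*u^2))"
    by (rule rational_relations_clear_denominators[OF \<open>g \<noteq> 0\<close> _ r1 r2])
  have cx: "coprime (int x1) (int x2)" using S0_pairwise_coprime(1)[OF S0] by simp
  have ca: "coprime a1 (int x1)" "coprime a2 (int x2)" by (rule S0_coprime_coefficient[OF S0]; simp)+
  obtain f where fP: "v^3 * (4*(a1 * int y1)*v^2 - 5*(a2 * int y2)*u^2) = f * (a2 * int x1)"
    and fQ: "u^3 * (5*(a1 * int y1)*v^2 - 4*(a2 * int y2)*u^2) = f * (a1 * int x2)"
    using common_factor_of_cross_relation[OF rel cx ca assms(3,1,2)] \<open>0 < x1\<close> by auto
  have "f \<noteq> 0"
  proof
    assume "f = 0"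
    hence "4*(a1 * int y1)*v^2 - 5*(a2 * int y2)*u^2 = 0" "5*(a1 * int y1)*v^2 - 4*(a2 * int y2)*u^2 = 0"
      using fP fQ uv by simp_all
    hence "9 * (a1 * int y1 * v^2) = 0" by linarith
    moreover have "0 < y1" using S0 unfolding mem_S0_iff by blast
    ultimately show False using \<open>a1 \<noteq> 0\<close> \<open>v > 0\<close> by simp
  qed
  from uv \<open>f \<noteq> 0\<close> fP fQ show ?thesis by (rule that)
qed

lemma S0_prime_dvd_y3:
  assumes S0: "(x1, x2, x3, y1, y2, y3) \<in> S0 a1 a2 a3 X1 X2 X3 Y1 Y2 Y3"
    and p: "prime p" "p dvd int y3"
  shows "\<not> p dvd a1 * a2 * a3" "\<not> p dvd int y1" "\<not> p dvd int y2"
proof -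
  have "coprime (a1 * a2 * a3) (int y3)" by (rule S0_coprime_coefficient[OF S0]) simp_all
  moreover have "coprime (int y1) (int y3)" "coprime (int y2) (int y3)"
    using S0_pairwise_coprime(2,3)[OF S0] by simp_all
  ultimately show "\<not> p dvd a1 * a2 * a3" "\<not> p dvd int y1" "\<not> p dvd int y2"
    using p by (meson coprime_common_divisor not_prime_unit)+
qed

lemma S0_square_y3_dvd:
  fixes a1 a2 a3 u v f \<alpha> \<beta> :: int
  assumes S0: "(x1, x2, x3, y1, y2, y3) \<in> S0 a1 a2 a3 X1 X2 X3 Y1 Y2 Y3"
    and "a1 \<noteq> 0" "a2 \<noteq> 0" "a3 \<noteq> 0" "f \<noteq> 0" "coprime u v" "\<alpha> + \<beta> \<noteq> 0"
    and fP: "v^3 * (4*(a1 * int y1)*v^2 - 5*(a2 * int y2)*u^2) = f * (a2 * int x1)"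
    and fQ: "u^3 * (5*(a1 * int y1)*v^2 - 4*(a2 * int y2)*u^2) = f * (a1 * int x2)"
    and \<alpha>: "\<alpha> = a1 * int y1 * v^2" and \<beta>: "\<beta> = a2 * int y2 * u^2"
    and rel: "(a1*a2*f)^2 * (a3 * int x3^2 * int y3^3) = - ((\<alpha> + \<beta>) * (4*\<alpha>^2 - 7*\<alpha>*\<beta> + 4*\<beta>^2)^2)"
  shows "int y3^2 dvd 900 * (\<alpha> + \<beta>)"
proof -
  have "0 < x3" "0 < y3" and sq: "squarefree (a3 * int y3)" using S0 unfolding mem_S0_iff by blast+
  hence sqy: "squarefree (int y3)" and "int y3 \<noteq> 0" "int x3 \<noteq> 0" using squarefree_multD(2) by auto
  show ?thesis
  proof (rule squarefree_square_dvd_900[OF sqy \<open>int y3 \<noteq> 0\<close> \<open>\<alpha> + \<beta> \<noteq> 0\<close>])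
    fix p assume p: "prime p" "p dvd int y3" "p \<notin> {2, 3, 5}"
    hence "p \<noteq> 2" "p \<noteq> 3" "p \<noteq> 5" by simp_all
    have "\<not> p dvd a1 * a2 * a3" and A: "\<not> p dvd a1 * int y1" and D: "\<not> p dvd a2 * int y2"
      using S0_prime_dvd_y3[OF S0 p(1,2)] p(1) by (simp_all add: prime_dvd_mult_iff)
    have "\<not> p dvd f"
    proof
      assume "p dvd f"
      hence "p dvd v^3 * (4*(a1 * int y1)*v^2 - 5*(a2 * int y2)*u^2)"
        "p dvd u^3 * (5*(a1 * int y1)*v^2 - 4*(a2 * int y2)*u^2)"
        unfolding fP fQ by simp_all
      thus False
        using prime_dvd_coefficient_of_dvd_forms[OF p(1) \<open>p \<noteq> 2\<close> \<open>p \<noteq> 3\<close> \<open>coprime u v\<close>] A D by blast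
    qed
    hence "\<not> p dvd a1 * a2 * f" using \<open>\<not> p dvd a1 * a2 * a3\<close> p(1) by (simp add: prime_dvd_mult_iff)
    moreover have "\<not> p dvd a3" using \<open>\<not> p dvd a1 * a2 * a3\<close> p(1) by (simp add: prime_dvd_mult_iff)
    moreover have "\<not> p dvd 4*\<alpha>^2 - 7*\<alpha>*\<beta> + 4*\<beta>^2" if "p dvd \<alpha> + \<beta>"
    proof
      assume "p dvd 4*\<alpha>^2 - 7*\<alpha>*\<beta> + 4*\<beta>^2"
      hence "p dvd \<alpha>" "p dvd \<beta>"
        using prime_dvd_both_of_dvd_sum_and_form[OF p(1) \<open>p \<noteq> 3\<close> \<open>p \<noteq> 5\<close> that] by simp_all
      hence "p dvd v" "p dvd u" using A D p(1) unfolding \<alpha> \<beta> by (simp_all add: prime_dvd_mult_iff prime_dvd_power_iff)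
      thus False using \<open>coprime u v\<close> p(1) by (meson coprime_common_divisor not_prime_unit)
    qed
    ultimately show "p^2 dvd \<alpha> + \<beta>"
      using prime_square_dvd_of_cube_relation[OF p(1,2) sqy _ _ rel] \<open>int y3 \<noteq> 0\<close> \<open>int x3 \<noteq> 0\<close>
        assms(2-5) by simp
  qed
qed

lemma S1_key_inequality:
  fixes a1 a2 a3 :: int
  assumes "a1 \<noteq> 0" "a2 \<noteq> 0" "a3 \<noteq> 0" "coprime a1 a2"
    and mem: "(x1, x2, x3, y1, y2, y3) \<in> S1 a1 a2 a3 X1 X2 X3 Y1 Y2 Y3"
  shows "(int y1 * int y2 * int y3)^2 \<le> 4665600 * (\<bar>a3\<bar> * int x3^2 * int y3^3)"
proof -
  have S0: "(x1, x2, x3, y1, y2, y3) \<in> S0 a1 a2 a3 X1 X2 X3 Y1 Y2 Y3" using mem by (simp add: mem_S1_iff)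
  obtain u v f where uv: "coprime u v" "v > 0" "u \<noteq> 0" "f \<noteq> 0"
    and fP: "v^3 * (4*(a1 * int y1)*v^2 - 5*(a2 * int y2)*u^2) = f * (a2 * int x1)"
    and fQ: "u^3 * (5*(a1 * int y1)*v^2 - 4*(a2 * int y2)*u^2) = f * (a1 * int x2)"
    using S1_descent[OF assms(1,2,4) mem] by blast
  define \<alpha> where "\<alpha> = a1 * int y1 * v^2"
  define \<beta> where "\<beta> = a2 * int y2 * u^2"
  have eq: "a1 * int x1^2 * int y1^3 + a2 * int x2^2 * int y2^3 + a3 * int x3^2 * int y3^3 = 0"
    using S0 unfolding mem_S0_iff by blast
  have rel: "(a1*a2*f)^2 * (a3 * int x3^2 * int y3^3) = - ((\<alpha> + \<beta>) * (4*\<alpha>^2 - 7*\<alpha>*\<beta> + 4*\<beta>^2)^2)"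
    using cube_relation_of_descent[OF eq fP fQ \<alpha>_def \<beta>_def] .
  have "squarefree (a1 * int y1)" "squarefree (a2 * int y2)" using S0 unfolding mem_S0_iff by blast+
  moreover have "coprime (a1 * int y1) (a2 * int y2)"
    using \<open>coprime a1 a2\<close> S0_pairwise_coprime(1)[OF S0]
      S0_coprime_coefficient[OF S0, of a1 y2] S0_coprime_coefficient[OF S0, of a2 y1]
    by (simp add: ac_simps)
  ultimately have f72: "f dvd 72*u*v" using form_divisor_dvd_72 uv fP fQ by (metis dvd_triv_left less_irrefl)
  have "0 < x3" "0 < y3" using S0 unfolding mem_S0_iff by blast+
  have "\<alpha> + \<beta> \<noteq> 0"
  proof
    assume "\<alpha> + \<beta> = 0"
    hence "(a1*a2*f)^2 * (a3 * int x3^2 * int y3^3) = 0" using rel by simp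
    thus False using \<open>0 < x3\<close> \<open>0 < y3\<close> assms(1-3) uv(4) by simp
  qed
  moreover have y3: "int y3^2 dvd 900 * (\<alpha> + \<beta>)"
    using S0_square_y3_dvd[OF S0 assms(1-3) uv(4,1) calculation fP fQ \<alpha>_def \<beta>_def rel] .
  moreover have R: "\<bar>(a1 * a2) * u^2 * v^2 * (int y1 * int y2)\<bar> \<le> 4*\<alpha>^2 - 7*\<alpha>*\<beta> + 4*\<beta>^2"
    using abs_mult_le_quadratic_form[of \<alpha> \<beta>] by (simp add: \<alpha>_def \<beta>_def mult_ac)
  ultimately have "(int y1 * int y2 * int y3)^2 \<le> 4665600 * \<bar>a3 * int x3^2 * int y3^3\<bar>"
    using size_bound_of_cube_relation[OF _ uv(3) _ _ f72 y3 R rel] assms(1,2) uv(2) by simp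
  thus ?thesis by (simp add: abs_mult)
qed

lemma S0_third_coordinates_unique:
  assumes "(x1, x2, x3, y1, y2, y3) \<in> S0 a1 a2 a3 X1 X2 X3 Y1 Y2 Y3"
    and "(x1, x2, x3', y1, y2, y3') \<in> S0 a1 a2 a3 X1 X2 X3 Y1 Y2 Y3" and "a3 \<noteq> 0"
  shows "x3 = x3'" "y3 = y3'"
proof -
  have eq: "a1 * int x1^2 * int y1^3 + a2 * int x2^2 * int y2^3 + a3 * int x3^2 * int y3^3 = 0"
    "a1 * int x1^2 * int y1^3 + a2 * int x2^2 * int y2^3 + a3 * int x3'^2 * int y3'^3 = 0"
    and pos: "0 < x3" "0 < y3" "0 < x3'" "0 < y3'"
    and sq: "squarefree (a3 * int y3)" "squarefree (a3 * int y3')"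
    using assms(1,2) unfolding mem_S0_iff by blast+
  from eq have "a3 * (int x3^2 * int y3^3) = a3 * (int x3'^2 * int y3'^3)"
    by (simp only: mult.assoc[symmetric])
  hence "int x3^2 * int y3^3 = int x3'^2 * int y3'^3" using \<open>a3 \<noteq> 0\<close> by simp
  moreover have "squarefree (int y3)" "squarefree (int y3')" using sq by (simp_all add: squarefree_multD(2))
  ultimately have "int x3 = int x3'" "int y3 = int y3'"
    using squarefree_cube_factor_unique[of "int x3" "int y3" "int x3'" "int y3'"] pos by simp_all
  thus "x3 = x3'" "y3 = y3'" by simp_all
qed

lemma card_S1_eq_card_S1star:
  assumes "a3 \<noteq> 0"
  shows "card (S1 a1 a2 a3 X1 X2 X3 Y1 Y2 Y3) = card (S1star a1 a2 a3 X1 X2 X3 Y1 Y2 Y3)"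
proof -
  define drop3 :: "nat \<times> nat \<times> nat \<times> nat \<times> nat \<times> nat \<Rightarrow> nat \<times> nat \<times> nat \<times> nat"
    where "drop3 = (\<lambda>(x1, x2, x3, y1, y2, y3). (x1, x2, y1, y2))"
  have "S1star a1 a2 a3 X1 X2 X3 Y1 Y2 Y3 = drop3 ` S1 a1 a2 a3 X1 X2 X3 Y1 Y2 Y3"
    unfolding S1star_def drop3_def by (auto simp: image_def) (metis case_prod_conv)
  moreover have "inj_on drop3 (S1 a1 a2 a3 X1 X2 X3 Y1 Y2 Y3)"
  proof (rule inj_onI)
    fix s t assume "s \<in> S1 a1 a2 a3 X1 X2 X3 Y1 Y2 Y3" "t \<in> S1 a1 a2 a3 X1 X2 X3 Y1 Y2 Y3"
      and "drop3 s = drop3 t"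
    moreover obtain x1 x2 x3 y1 y2 y3 where s: "s = (x1, x2, x3, y1, y2, y3)" by (cases s) auto
    moreover obtain x3' y3' where "t = (x1, x2, x3', y1, y2, y3')"
      using \<open>drop3 s = drop3 t\<close> by (cases t) (auto simp: s drop3_def)
    ultimately show "s = t"
      using S0_third_coordinates_unique[of x1 x2 x3 y1 y2 y3 a1 a2 a3 X1 X2 X3 Y1 Y2 Y3 x3' y3'] assms
      by (simp add: mem_S1_iff)
  qed
  ultimately show ?thesis by (simp add: card_image)
qed

lemma card_S1_le_box:
  "card (S1 a1 a2 a3 X1 X2 X3 Y1 Y2 Y3) \<le> X1 * X2 * X3 * Y1 * Y2 * Y3"
proof -
  have "S1 a1 a2 a3 X1 X2 X3 Y1 Y2 Y3 \<subseteq> {1..X1} \<times> {1..X2} \<times> {1..X3} \<times> {1..Y1} \<times> {1..Y2} \<times> {1..Y3}"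
    by (auto simp: mem_S1_iff mem_S0_iff)
  hence "card (S1 a1 a2 a3 X1 X2 X3 Y1 Y2 Y3)
      \<le> card ({1..X1} \<times> {1..X2} \<times> {1..X3} \<times> {1..Y1} \<times> {1..Y2} \<times> {1..Y3})"
    by (rule card_mono[rotated]) simp
  thus ?thesis by (simp add: card_cartesian_product)
qed

(* 9555148800 = 64 * 32 * 4665600 *)
lemma S1_nonempty_imp_bounded:
  fixes a1 a2 a3 :: int and B :: real
  assumes "a1 \<noteq> 0" "a2 \<noteq> 0" "a3 \<noteq> 0" "coprime a1 a2" "B \<ge> 2"
    and X3Y3: "real X3 ^ 2 * real Y3 ^ 3 \<le> 32 * B / \<bar>real_of_int a3\<bar>"
    and Y: "B powr (1/5 - 1/90) \<le> real Y1" "B powr (1/5 - 1/90) \<le> real Y2" "B powr (1/5 - 1/90) \<le> real Y3"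
    and "S1 a1 a2 a3 X1 X2 X3 Y1 Y2 Y3 \<noteq> {}"
  shows "B \<le> 9555148800 powr (15/2)"
proof -
  obtain x1 x2 x3 y1 y2 y3 where mem: "(x1, x2, x3, y1, y2, y3) \<in> S1 a1 a2 a3 X1 X2 X3 Y1 Y2 Y3"
    using \<open>S1 a1 a2 a3 X1 X2 X3 Y1 Y2 Y3 \<noteq> {}\<close> by auto
  have box: "x3 \<le> X3" "y3 \<le> Y3" "real Y1 / 2 < real y1" "real Y2 / 2 < real y2" "real Y3 / 2 < real y3"
    using mem unfolding mem_S1_iff mem_S0_iff by blast+
  have "real_of_int ((int y1 * int y2 * int y3)^2) \<le> real_of_int (4665600 * (\<bar>a3\<bar> * int x3^2 * int y3^3))"
    using S1_key_inequality[OF assms(1-4) mem] by (simp only: of_int_le_iff)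
  hence key: "(real y1 * real y2 * real y3)^2 \<le> 4665600 * (\<bar>real_of_int a3\<bar> * (real x3^2 * real y3^3))"
    by simp
  have "real x3^2 * real y3^3 \<le> real X3^2 * real Y3^3" using box by (intro mult_mono power_mono) simp_all
  hence "\<bar>real_of_int a3\<bar> * (real x3^2 * real y3^3) \<le> \<bar>real_of_int a3\<bar> * (real X3^2 * real Y3^3)"
    by (intro mult_left_mono) simp_all
  also have "\<dots> \<le> 32 * B" using X3Y3 \<open>a3 \<noteq> 0\<close> by (simp add: pos_le_divide_eq mult.commute)
  finally have upper: "(real y1 * real y2 * real y3)^2 \<le> 4665600 * (32 * B)" using key by linarith
  define L where "L = B powr (1/5 - 1/90)"
  have "L / 2 \<le> real y1" "L / 2 \<le> real y2" "L / 2 \<le> real y3" using box Y by (simp_all add: L_def)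
  hence "((L/2) * (L/2) * (L/2))^2 \<le> (real y1 * real y2 * real y3)^2"
    by (intro power_mono mult_mono) (simp_all add: L_def)
  moreover have "((L/2) * (L/2) * (L/2))^2 = B powr (17/15) / 64"
    using \<open>B \<ge> 2\<close> by (simp add: L_def power2_eq_square field_simps flip: powr_add)
  moreover have "B powr (17/15) = B powr (2/15) * B" using \<open>B \<ge> 2\<close> powr_add[of B "2/15" 1] by simp
  ultimately have "B powr (2/15) * B \<le> 9555148800 * B" using upper by linarith
  hence "B powr (2/15) \<le> 9555148800" using \<open>B \<ge> 2\<close> by simp
  hence "(B powr (2/15)) powr (15/2) \<le> 9555148800 powr (15/2)" by (intro powr_mono2) simp_all
  thus ?thesis using \<open>B \<ge> 2\<close> by (simp add: powr_powr)
qed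

lemma card_S1_le:
  fixes a1 a2 a3 :: int and B :: real
  assumes "a1 \<noteq> 0" "a2 \<noteq> 0" "a3 \<noteq> 0" "coprime a1 a2" "B \<ge> 2"
    and "real X1 \<le> 2 * B" "real X2 \<le> 2 * B" "real X3 \<le> 2 * B"
    and "real Y1 \<le> 2 * B" "real Y2 \<le> 2 * B" "real Y3 \<le> 2 * B"
    and "real X3 ^ 2 * real Y3 ^ 3 \<le> 32 * B / \<bar>real_of_int a3\<bar>"
    and "B powr (1/5 - 1/90) \<le> real Y1" "B powr (1/5 - 1/90) \<le> real Y2" "B powr (1/5 - 1/90) \<le> real Y3"
  shows "real (card (S1 a1 a2 a3 X1 X2 X3 Y1 Y2 Y3)) \<le> ((2 * 9555148800 powr (15/2))^6 + 1) * B powr (1/2)"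
proof (cases "S1 a1 a2 a3 X1 X2 X3 Y1 Y2 Y3 = {}")
  case True
  thus ?thesis by (simp add: add_pos_nonneg)
next
  case False
  have "real (card (S1 a1 a2 a3 X1 X2 X3 Y1 Y2 Y3)) \<le> real X1 * real X2 * real X3 * real Y1 * real Y2 * real Y3"
    using card_S1_le_box[of a1 a2 a3 X1 X2 X3 Y1 Y2 Y3] by (simp flip: of_nat_mult)
  also have "\<dots> \<le> (2*B) * (2*B) * (2*B) * (2*B) * (2*B) * (2*B)"
    using assms(6-11) by (intro mult_mono) simp_all
  also have "\<dots> = (2*B)^6" by (simp add: eval_nat_numeral)
  also have "\<dots> \<le> (2 * 9555148800 powr (15/2))^6"
    using S1_nonempty_imp_bounded[OF assms(1-5,12-15) False] \<open>B \<ge> 2\<close> by (intro power_mono) simp_all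
  also have "\<dots> \<le> ((2 * 9555148800 powr (15/2))^6 + 1) * 1" by simp
  also have "\<dots> \<le> ((2 * 9555148800 powr (15/2))^6 + 1) * B powr (1/2)"
    using \<open>B \<ge> 2\<close> by (intro mult_left_mono ge_one_powr_ge_zero) simp_all
  finally show ?thesis .
qed

theorem lemma15:
  "\<exists>C::real. C > 0 \<and>
    (\<forall>(a1::int) (a2::int) (a3::int) (B::real) (X1::nat) X2 X3 (Y1::nat) Y2 Y3.
      a1 \<noteq> 0 \<and> a2 \<noteq> 0 \<and> a3 \<noteq> 0 \<and>
      squarefree a1 \<and> squarefree a2 \<and> squarefree a3 \<and>
      coprime a1 a2 \<and> coprime a1 a3 \<and> coprime a2 a3 \<and>
      B \<ge> 2 \<and>
      pow2 X1 \<and> pow2 X2 \<and> pow2 X3 \<and> pow2 Y1 \<and> pow2 Y2 \<and> pow2 Y3 \<and>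
      real X1 \<le> 2 * B \<and> real X2 \<le> 2 * B \<and> real X3 \<le> 2 * B \<and>
      real Y1 \<le> 2 * B \<and> real Y2 \<le> 2 * B \<and> real Y3 \<le> 2 * B \<and>
      real X1 ^ 2 * real Y1 ^ 3 \<le> 32 * B / \<bar>real_of_int a1\<bar> \<and>
      real X2 ^ 2 * real Y2 ^ 3 \<le> 32 * B / \<bar>real_of_int a2\<bar> \<and>
      real X3 ^ 2 * real Y3 ^ 3 \<le> 32 * B / \<bar>real_of_int a3\<bar> \<and>
      (\<forall>Xk \<in> {X1, X2, X3}. B powr (1/5 - 1/60) \<le> real Xk \<and> real Xk \<le> B powr (1/5 + 1/60)) \<and>
      (\<forall>Yk \<in> {Y1, Y2, Y3}. B powr (1/5 - 1/90) \<le> real Yk \<and> real Yk \<le> B powr (1/5 + 1/90))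
      \<longrightarrow>
      card (S1 a1 a2 a3 X1 X2 X3 Y1 Y2 Y3) = card (S1star a1 a2 a3 X1 X2 X3 Y1 Y2 Y3) \<and>
      real (card (S1 a1 a2 a3 X1 X2 X3 Y1 Y2 Y3)) \<le> C * B powr (1/2))"
proof (intro exI[of _ "(2 * 9555148800 powr (15/2))^6 + 1"] conjI allI impI, goal_cases)
  case 1
  show ?case by (simp add: add_pos_nonneg)
next
  case (2 a1 a2 a3 B X1 X2 X3 Y1 Y2 Y3)
  then show ?case by (simp add: card_S1_eq_card_S1star)
next
  case (3 a1 a2 a3 B X1 X2 X3 Y1 Y2 Y3)
  then show ?case by (intro card_S1_le) simp_all
qed

end
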